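(* Let $0<\tau<1$ be fixed and let $(Y_i,X_i,\mathbf{Z}_i)$, $i=1,\dots,n$, be i.i.d. copies of $(Y,X,\mathbf{Z})$ satisfying conditions (A1)–(A5) below. Then, as $n\to\infty$, $$\sup_{\boldsymbol{\theta}\in\Theta}|M_{n,\tau}(\boldsymbol{\theta})-M_\tau(\boldsymbol{\theta})|\to0\quad\text{in probability}.$$
   Context: $a_+=aI(a>0)$. $\boldsymbol{\xi}=(\beta_0,\beta_1,\beta_2,\boldsymbol{\gamma}^\top)^\top$, $\boldsymbol{\theta}=(\boldsymbol{\xi}^\top,t)^\top$, $\mathbf{V}(t)=(1,X,(X-t)_+,\mathbf{Z}^\top)^\top$, $\mathbf{V}_i(t)=(1,X_i,(X_i-t)_+,\mathbf{Z}_i^\top)^\top$, with $\mathbf{Z}$ a $p$-vector. $\rho_\tau(u)=(1-\tau)u^2$ for $u\le0$, $\tau u^2$ for $u>0$. $M_{n,\tau}(\boldsymbol{\theta})=n^{-1}\sum_{i=1}^n\rho_\tau(Y_i-\boldsymbol{\xi}^\top\mathbf{V}_i(t))$ and $M_\tau(\boldsymbol{\theta})=E\rho_\tau(Y-\boldsymbol{\xi}^\top\mathbf{V}(t))$. The data follow the model $\nu_\tau(Y\mid X,\mathbf{Z})=\boldsymbol{\xi}^\top\mathbf{V}(t)$ for the $\tau$-expectile (minimizer of $E\rho_\tau(Y-\nu)$ conditionally), with true parameter $\boldsymbol{\theta}_\tau$; $\widehat{\boldsymbol{\xi}}(t)=\arg\min_{\boldsymbol{\xi}}M_{n,\tau}(\boldsymbol{\xi},t)$;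 $\mathcal{T}$ is the set of candidate thresholds. Conditions: (A1) $t_0=\arg\min_{t\in\mathcal{T}}M_\tau(\widehat{\boldsymbol{\xi}}(t),t)$ is unique, $\mathcal{T}$ compact in $\mathbb{R}$. (A2) $\boldsymbol{\theta}_\tau\in\Theta$, a compact subset of $\mathbb{R}^{p+4}$. (A3) $X$ has an absolutely continuous distribution with density strictly positive, bounded and continuous near $t_0$. (A4) $E|Y|^2,E|X|^2,E|\mathbf{Z}|^2<\infty$. (A5) Given $\beta_2\ne0$, the Hessian of $M_\tau$ at the true parameter is nonsingular. *)

theory Defs
  imports "HOL-Probability.Probability"
begin

definition rho :: "real \<Rightarrow> real \<Rightarrow> real" where
  "rho tau u = (if u \<le> 0 then (1 - tau) * u\<^sup>2 else tau * u\<^sup>2)"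

definition pos_part :: "real \<Rightarrow> real" where
  "pos_part a = (if a > 0 then a else 0)"

definition lin_index :: "real \<times> real \<times> real \<times> (real ^ 'p) \<Rightarrow> real \<Rightarrow> real \<Rightarrow> real ^ 'p \<Rightarrow> real" where
  "lin_index xi t x z = (case xi of (b0, b1, b2, g) \<Rightarrow> b0 + b1 * x + b2 * pos_part (x - t) + g \<bullet> z)"

definition Mn :: "real \<Rightarrow> (nat \<Rightarrow> 'a \<Rightarrow> real) \<Rightarrow> (nat \<Rightarrow> 'a \<Rightarrow> real) \<Rightarrow> (nat \<Rightarrow> 'a \<Rightarrow> real ^ 'p)
   \<Rightarrow> nat \<Rightarrow> (real \<times> real \<times> real \<times> (real ^ 'p)) \<times> real \<Rightarrow> 'a \<Rightarrow> real" where
  "Mn tau Y X Z n theta \<omega> =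
     (\<Sum>i<n. rho tau (Y i \<omega> - lin_index (fst theta) (snd theta) (X i \<omega>) (Z i \<omega>))) / real n"

definition Mpop :: "'a measure \<Rightarrow> real \<Rightarrow> ('a \<Rightarrow> real) \<Rightarrow> ('a \<Rightarrow> real) \<Rightarrow> ('a \<Rightarrow> real ^ 'p)
   \<Rightarrow> (real \<times> real \<times> real \<times> (real ^ 'p)) \<times> real \<Rightarrow> real" where
  "Mpop M tau Y X Z theta =
     (\<integral>\<omega>. rho tau (Y \<omega> - lin_index (fst theta) (snd theta) (X \<omega>) (Z \<omega>)) \<partial>M)"

end

theory Submission
  imports Defs
begin

text \<open>On the bounded set \<open>\<Theta>\<close> the loss \<open>\<theta> \<mapsto> \<rho>\<^sub>\<tau>(Y - \<xi>\<^sup>T V(t))\<close> is Lipschitz with a random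
  constant \<open>K(Y, X, Z)\<close>, a quadratic polynomial in \<open>|Y|, |X|, \<parallel>Z\<parallel>\<close>, which also dominates the loss and
  is integrable by (A4). Covering the compact \<open>\<Theta>\<close> by finitely many \<open>\<delta>\<close>-balls bounds the uniform
  deviation by the deviations at the finitely many centres plus \<open>\<delta>\<close> times the empirical and the
  population mean of \<open>K\<close>; each of these is controlled by the weak law of large numbers.\<close>

section \<open>The expectile loss\<close>

lemma rho_nonneg: "0 \<le> tau \<Longrightarrow> tau \<le> 1 \<Longrightarrow> 0 \<le> rho tau u"
  unfolding rho_def by auto

lemma rho_le_square: "0 \<le> tau \<Longrightarrow> tau \<le> 1 \<Longrightarrow> rho tau u \<le> u\<^sup>2"
  unfolding rho_def by (auto simp: mult_left_le_one_le)

lemma rho_diff_le: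
  assumes "0 \<le> tau" "tau \<le> 1"
  shows "\<bar>rho tau u - rho tau v\<bar> \<le> (\<bar>u\<bar> + \<bar>v\<bar>) * \<bar>u - v\<bar>"
proof -
  have "(\<exists>w. 0 \<le> w \<and> w \<le> 1 \<and> rho tau u = w * u\<^sup>2 \<and> rho tau v = w * v\<^sup>2)
      \<or> \<bar>u - v\<bar> = \<bar>u\<bar> + \<bar>v\<bar>"
    using assms unfolding rho_def
    by (cases "u \<le> 0"; cases "v \<le> 0") (auto intro: exI[of _ tau] exI[of _ "1 - tau"])
  then consider (same_sign) w where "0 \<le> w" "w \<le> 1" "rho tau u = w * u\<^sup>2" "rho tau v = w * v\<^sup>2"
    | (opposite_sign) "\<bar>u - v\<bar> = \<bar>u\<bar> + \<bar>v\<bar>"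
    by blast
  then show ?thesis
  proof cases
    case same_sign
    have "rho tau u - rho tau v = w * ((u + v) * (u - v))"
      using same_sign by (simp add: power2_eq_square algebra_simps)
    then have "\<bar>rho tau u - rho tau v\<bar> = w * (\<bar>u + v\<bar> * \<bar>u - v\<bar>)"
      using same_sign(1) by (simp add: abs_mult)
    also have "\<dots> \<le> \<bar>u + v\<bar> * \<bar>u - v\<bar>"
      using same_sign by (simp add: mult_left_le_one_le)
    also have "\<dots> \<le> (\<bar>u\<bar> + \<bar>v\<bar>) * \<bar>u - v\<bar>"
      by (simp add: abs_triangle_ineq mult_right_mono)
    finally show ?thesis .
  next
    case opposite_sign
    have "\<bar>rho tau u - rho tau v\<bar> \<le> u\<^sup>2 + v\<^sup>2"
      using rho_nonneg[OF assms] rho_le_square[OF assms] by (smt (verit))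
    also have "\<dots> \<le> (\<bar>u\<bar> + \<bar>v\<bar>) * (\<bar>u\<bar> + \<bar>v\<bar>)"
      by (simp add: power2_eq_square algebra_simps)
    finally show ?thesis
      using opposite_sign by simp
  qed
qed

lemma rho_diff_shift_le:
  assumes "0 \<le> tau" "tau \<le> 1" "\<bar>a\<bar> \<le> A" "\<bar>b\<bar> \<le> A"
  shows "\<bar>rho tau (y - a) - rho tau (y - b)\<bar> \<le> 2 * (\<bar>y\<bar> + A) * \<bar>a - b\<bar>"
proof -
  have "\<bar>y - a\<bar> + \<bar>y - b\<bar> \<le> 2 * (\<bar>y\<bar> + A)"
    using assms(3,4) by (smt (verit) abs_triangle_ineq4)
  then have "(\<bar>y - a\<bar> + \<bar>y - b\<bar>) * \<bar>a - b\<bar> \<le> 2 * (\<bar>y\<bar> + A) * \<bar>a - b\<bar>"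
    by (rule mult_right_mono) simp
  then show ?thesis
    using rho_diff_le[OF assms(1,2), of "y - a" "y - b"] by (simp add: abs_minus_commute)
qed

lemma pos_part_nonneg: "0 \<le> pos_part a"
  unfolding pos_part_def by simp

lemma pos_part_diff_le: "pos_part (x - t) \<le> \<bar>x\<bar> + \<bar>t\<bar>"
  unfolding pos_part_def by (smt (verit))

lemma pos_part_lipschitz: "\<bar>pos_part a - pos_part b\<bar> \<le> \<bar>a - b\<bar>"
  unfolding pos_part_def by simp

lemma abs_components_le_norm:
  fixes b0 b1 b2 :: real and g :: "'a::real_normed_vector"
  shows "\<bar>b0\<bar> \<le> norm (b0, b1, b2, g)" "\<bar>b1\<bar> \<le> norm (b0, b1, b2, g)"
    "\<bar>b2\<bar> \<le> norm (b0, b1, b2, g)" "norm g \<le> norm (b0, b1, b2, g)"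
  using norm_fst_le[of b0 "(b1, b2, g)"] norm_snd_le[of "(b1, b2, g)" b0]
    norm_fst_le[of b1 "(b2, g)"] norm_snd_le[of "(b2, g)" b1]
    norm_fst_le[of b2 g] norm_snd_le[of g b2]
  by auto

lemma sum_le_scaled:
  fixes a b d c p q :: real
  assumes "a \<le> c" "b \<le> c" "d \<le> c" "0 \<le> p" "0 \<le> q"
  shows "a + b * p + d * q \<le> c * (1 + p + q)"
  using mult_right_mono[OF assms(2,4)] mult_right_mono[OF assms(3,5)] assms(1)
  by (simp add: algebra_simps)

lemma lin_index_abs_le:
  "\<bar>lin_index xi t x z\<bar> \<le> norm xi * (1 + \<bar>x\<bar> + pos_part (x - t) + norm z)"
proof -
  obtain b0 b1 b2 g where xi: "xi = (b0, b1, b2, g)"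
    by (metis prod.collapse)
  have comps: "\<bar>b0\<bar> \<le> norm xi" "\<bar>b1\<bar> \<le> norm xi" "\<bar>b2\<bar> \<le> norm xi" "norm g \<le> norm xi"
    unfolding xi by (rule abs_components_le_norm)+
  have "\<bar>lin_index xi t x z\<bar> \<le> \<bar>b0\<bar> + \<bar>b1\<bar> * \<bar>x\<bar> + \<bar>b2\<bar> * pos_part (x - t) + norm g * norm z"
  proof -
    have "\<bar>b1 * x\<bar> = \<bar>b1\<bar> * \<bar>x\<bar>" "\<bar>b2 * pos_part (x - t)\<bar> = \<bar>b2\<bar> * pos_part (x - t)"
      using pos_part_nonneg[of "x - t"] by (simp_all add: abs_mult)
    then show ?thesis
      using Cauchy_Schwarz_ineq2[of g z] abs_triangle_ineq[of "b0 + b1 * x + b2 * pos_part (x - t)" "g \<bullet> z"]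
        abs_triangle_ineq[of "b0 + b1 * x" "b2 * pos_part (x - t)"] abs_triangle_ineq[of b0 "b1 * x"]
      unfolding xi lin_index_def by simp
  qed
  also have "\<dots> \<le> norm xi * (1 + \<bar>x\<bar> + pos_part (x - t) + norm z)"
    using comps pos_part_nonneg[of "x - t"]
      mult_right_mono[OF comps(2), of "\<bar>x\<bar>"] mult_right_mono[OF comps(3), of "pos_part (x - t)"]
      mult_right_mono[OF comps(4), of "norm z"]
    by (simp add: algebra_simps)
  finally show ?thesis .
qed

lemma lin_index_diff:
  "lin_index xi t x z - lin_index xi' t' x z
     = lin_index (xi - xi') t' x z + fst (snd (snd xi)) * (pos_part (x - t) - pos_part (x - t'))"
  by (cases xi, cases xi') (simp add: lin_index_def algebra_simps inner_diff_left)

lemma lin_index_bound: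
  assumes "norm (xi, t) \<le> B"
  shows "\<bar>lin_index xi t x z\<bar> \<le> (2 + B)\<^sup>2 * (1 + \<bar>x\<bar> + norm z)"
proof -
  have B: "norm xi \<le> B" "\<bar>t\<bar> \<le> B" "0 \<le> B"
    using norm_fst_le[of xi t] norm_snd_le[of t xi] assms by auto
  have "\<bar>lin_index xi t x z\<bar> \<le> B * (1 + \<bar>x\<bar> + (\<bar>x\<bar> + B) + norm z)"
    using lin_index_abs_le[of xi t x z] pos_part_diff_le[of x t] pos_part_nonneg[of "x - t"] B
    by (smt (verit) mult_mono norm_ge_zero abs_ge_zero)
  also have "\<dots> = B * (1 + B) + (2 * B) * \<bar>x\<bar> + B * norm z"
    by (simp add: algebra_simps)
  also have "\<dots> \<le> (2 + B)\<^sup>2 * (1 + \<bar>x\<bar> + norm z)"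
    using B(3) by (intro sum_le_scaled) (auto simp: power2_eq_square algebra_simps)
  finally show ?thesis .
qed

lemma lin_index_lipschitz:
  assumes "norm (xi, t) \<le> B" "norm (xi', t') \<le> B"
  shows "\<bar>lin_index xi t x z - lin_index xi' t' x z\<bar>
           \<le> dist (xi, t) (xi', t') * ((2 + B)\<^sup>2 * (1 + \<bar>x\<bar> + norm z))"
proof -
  define d where "d = dist (xi, t) (xi', t')"
  obtain b0 b1 b2 g where xi: "xi = (b0, b1, b2, g)"
    by (metis prod.collapse)
  have "\<bar>b2\<bar> \<le> norm xi"
    unfolding xi by (rule abs_components_le_norm)
  then have B: "\<bar>b2\<bar> \<le> B" "\<bar>t'\<bar> \<le> B" "0 \<le> B"
    using norm_fst_le[of xi t] norm_snd_le[of t' xi'] assms by auto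
  have d: "norm (xi - xi') \<le> d" "\<bar>t - t'\<bar> \<le> d" "0 \<le> d"
    using dist_fst_le[of "(xi, t)" "(xi', t')"] dist_snd_le[of "(xi, t)" "(xi', t')"]
    unfolding d_def by (auto simp: dist_norm)
  have "\<bar>lin_index (xi - xi') t' x z\<bar> \<le> d * (1 + \<bar>x\<bar> + (\<bar>x\<bar> + B) + norm z)"
    using lin_index_abs_le[of "xi - xi'" t' x z] pos_part_diff_le[of x t'] pos_part_nonneg[of "x - t'"] B d
    by (smt (verit) mult_mono norm_ge_zero abs_ge_zero)
  moreover have "\<bar>b2 * (pos_part (x - t) - pos_part (x - t'))\<bar> \<le> B * d"
    using pos_part_lipschitz[of "x - t" "x - t'"] B d unfolding abs_mult
    by (intro mult_mono) auto
  ultimately have "\<bar>lin_index xi t x z - lin_index xi' t' x z\<bar>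
      \<le> d * (1 + 2 * B) + (2 * d) * \<bar>x\<bar> + d * norm z"
    unfolding lin_index_diff xi by (simp add: algebra_simps)
  also have "\<dots> = d * ((1 + 2 * B) + 2 * \<bar>x\<bar> + 1 * norm z)"
    by (simp add: algebra_simps)
  also have "\<dots> \<le> d * ((2 + B)\<^sup>2 * (1 + \<bar>x\<bar> + norm z))"
    using B(3) d(3) by (intro mult_left_mono sum_le_scaled) (auto simp: power2_eq_square algebra_simps)
  finally show ?thesis
    unfolding d_def .
qed

lemma rho_eq_min_max: "rho tau u = (1 - tau) * (min u 0)\<^sup>2 + tau * (max u 0)\<^sup>2"
  unfolding rho_def by (auto simp: min_def max_def)

lemma lin_index_eq:
  "lin_index xi t x z
     = fst xi + fst (snd xi) * x + fst (snd (snd xi)) * max (x - t) 0 + snd (snd (snd xi)) \<bullet> z"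
  unfolding lin_index_def pos_part_def by (auto split: prod.splits)

lemma square_sum4_le:
  fixes a b c d :: real
  shows "(a + b + c + d)\<^sup>2 \<le> 4 * (a\<^sup>2 + b\<^sup>2 + c\<^sup>2 + d\<^sup>2)"
proof -
  have "0 \<le> (a - b)\<^sup>2 + (a - c)\<^sup>2 + (a - d)\<^sup>2 + (b - c)\<^sup>2 + (b - d)\<^sup>2 + (c - d)\<^sup>2"
    by simp
  then show ?thesis
    by (simp add: power2_eq_square algebra_simps)
qed

definition expectile_loss ::
    "real \<Rightarrow> (real \<times> real \<times> real \<times> (real ^ 'p)) \<times> real \<Rightarrow> real \<times> real \<times> (real ^ 'p) \<Rightarrow> real" where
  "expectile_loss tau th v = rho tau (fst v - lin_index (fst th) (snd th) (fst (snd v)) (snd (snd v)))"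

definition loss_envelope :: "real \<Rightarrow> real \<times> real \<times> (real ^ 'p) \<Rightarrow> real" where
  "loss_envelope B v = 2 * ((2 + B)\<^sup>2 * (1 + \<bar>fst v\<bar> + \<bar>fst (snd v)\<bar> + norm (snd (snd v))))\<^sup>2"

lemma expectile_loss_measurable [measurable]: "expectile_loss tau th \<in> borel_measurable borel"
  unfolding expectile_loss_def[abs_def] rho_eq_min_max lin_index_eq
  by (intro borel_measurable_continuous_onI continuous_intros)

lemma loss_envelope_measurable [measurable]: "loss_envelope B \<in> borel_measurable borel"
  unfolding loss_envelope_def[abs_def]
  by (intro borel_measurable_continuous_onI continuous_intros)

lemma expectile_loss_lipschitz_bound:
  assumes tau: "0 \<le> tau" "tau \<le> 1" and th: "norm th \<le> B" "norm th' \<le> B"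
  shows "\<bar>expectile_loss tau th v - expectile_loss tau th' v\<bar> \<le> dist th th' * loss_envelope B v"
    and "\<bar>expectile_loss tau th v\<bar> \<le> loss_envelope B v"
proof -
  obtain y x z where v: "v = (y, x, z)"
    by (metis prod.collapse)
  obtain xi t xi' t' where th_eq: "th = (xi, t)" "th' = (xi', t')"
    by (metis prod.collapse)
  define c where "c = (2 + B)\<^sup>2"
  define s where "s = 1 + \<bar>x\<bar> + norm z"
  define W where "W = c * (1 + \<bar>y\<bar> + \<bar>x\<bar> + norm z)"
  define d where "d = dist th th'"
  have "1 \<le> c"
    using th(1) norm_ge_zero[of th] unfolding c_def by (intro one_le_power) linarith
  then have W: "\<bar>y\<bar> + c * s \<le> W" "c * s \<le> W" "0 \<le> c * s"
    using mult_right_mono[of 1 c "\<bar>y\<bar>"] unfolding W_def s_def by (auto simp: algebra_simps)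
  have lin: "\<bar>lin_index xi t x z\<bar> \<le> c * s" "\<bar>lin_index xi' t' x z\<bar> \<le> c * s"
    using lin_index_bound th unfolding th_eq c_def s_def by blast+
  have "\<bar>expectile_loss tau th v - expectile_loss tau th' v\<bar>
      \<le> 2 * (\<bar>y\<bar> + c * s) * \<bar>lin_index xi t x z - lin_index xi' t' x z\<bar>"
    unfolding expectile_loss_def v th_eq fst_conv snd_conv by (rule rho_diff_shift_le[OF tau lin])
  also have "\<dots> \<le> 2 * W * (d * W)"
  proof (intro mult_mono)
    show "\<bar>lin_index xi t x z - lin_index xi' t' x z\<bar> \<le> d * W"
      using lin_index_lipschitz[of xi t B xi' t' x z] th mult_left_mono[OF W(2) zero_le_dist[of th th']]
      unfolding th_eq c_def s_def d_def by linarith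
  qed (use W in auto)
  also have "\<dots> = d * loss_envelope B v"
    unfolding loss_envelope_def v W_def c_def by (simp add: power2_eq_square)
  finally show "\<bar>expectile_loss tau th v - expectile_loss tau th' v\<bar> \<le> dist th th' * loss_envelope B v"
    unfolding d_def .
  have "\<bar>expectile_loss tau th v\<bar> \<le> (y - lin_index xi t x z)\<^sup>2"
    using rho_nonneg[OF tau] rho_le_square[OF tau] unfolding expectile_loss_def v th_eq by simp
  also have "\<dots> \<le> W\<^sup>2"
    unfolding abs_le_square_iff[symmetric] using lin(1) W by (smt (verit))
  also have "\<dots> \<le> loss_envelope B v"
    unfolding loss_envelope_def v W_def c_def by simp
  finally show "\<bar>expectile_loss tau th v\<bar> \<le> loss_envelope B v" .
qed

lemma (in finite_measure) integrable_loss_envelope: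
  assumes [measurable]: "Y \<in> borel_measurable M" "X \<in> borel_measurable M" "Z \<in> borel_measurable M"
    and "integrable M (\<lambda>\<omega>. (Y \<omega>)\<^sup>2)" "integrable M (\<lambda>\<omega>. (X \<omega>)\<^sup>2)" "integrable M (\<lambda>\<omega>. (norm (Z \<omega>))\<^sup>2)"
  shows "integrable M (\<lambda>\<omega>. loss_envelope B (Y \<omega>, X \<omega>, Z \<omega>))"
proof (rule Bochner_Integration.integrable_bound)
  show "integrable M (\<lambda>\<omega>. 2 * (2 + B)^4 * (4 * (1 + (Y \<omega>)\<^sup>2 + (X \<omega>)\<^sup>2 + (norm (Z \<omega>))\<^sup>2)))"
    using assms(4-6) by (intro integrable_mult_right Bochner_Integration.integrable_add) auto
  show "AE \<omega> in M. norm (loss_envelope B (Y \<omega>, X \<omega>, Z \<omega>))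
      \<le> norm (2 * (2 + B)^4 * (4 * (1 + (Y \<omega>)\<^sup>2 + (X \<omega>)\<^sup>2 + (norm (Z \<omega>))\<^sup>2)))"
    using square_sum4_le[of 1 "\<bar>Y _\<bar>" "\<bar>X _\<bar>" "norm (Z _)"]
    by (intro AE_I2) (simp add: loss_envelope_def power_mult_distrib mult_left_mono flip: power_mult)
qed measurable

section \<open>A weak law of large numbers\<close>

lemma distr_compose_eq:
  assumes "distr M N (U i) = distr M N (U j)" "U i \<in> M \<rightarrow>\<^sub>M N" "U j \<in> M \<rightarrow>\<^sub>M N" "f \<in> N \<rightarrow>\<^sub>M L"
  shows "distr M L (\<lambda>\<omega>. f (U i \<omega>)) = distr M L (\<lambda>\<omega>. f (U j \<omega>))"
  using distr_distr[OF assms(4,2)] distr_distr[OF assms(4,3)] assms(1) by (simp add: comp_def)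

lemma (in prob_space) identically_distributed_expectation:
  fixes V W :: "'a \<Rightarrow> real"
  assumes "distr M borel V = distr M borel W" "random_variable borel V" "random_variable borel W"
  shows "integrable M V \<longleftrightarrow> integrable M W" "expectation V = expectation W"
  using integrable_distr_eq[OF assms(2), of "\<lambda>x. x"] integrable_distr_eq[OF assms(3), of "\<lambda>x. x"]
    integral_distr[OF assms(2), of "\<lambda>x. x"] integral_distr[OF assms(3), of "\<lambda>x. x"] assms(1)
  by simp_all

lemma exp_neg_linear_tendsto_zero:
  assumes "0 < k"
  shows "(\<lambda>n::nat. exp (- (k * real n))) \<longlonglongrightarrow> 0"
proof -
  have "exp (- (k * real n)) = exp (- k) ^ n" for n
    by (metis exp_of_nat_mult mult.commute mult_minus_right)
  then show ?thesis
    using LIMSEQ_power_zero[of "exp (- k)"] assms by simp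
qed

lemma abs_average_diff_le:
  fixes u v :: "nat \<Rightarrow> real"
  shows "\<bar>(\<Sum>i<n. u i) / real n - \<mu>\<bar>
           \<le> \<bar>(\<Sum>i<n. v i) / real n - \<nu>\<bar> + (\<Sum>i<n. \<bar>u i - v i\<bar>) / real n + \<bar>\<mu> - \<nu>\<bar>"
proof -
  have "(\<Sum>i<n. u i) / real n - \<mu> = ((\<Sum>i<n. v i) / real n - \<nu>) + (\<Sum>i<n. u i - v i) / real n - (\<mu> - \<nu>)"
    by (simp add: sum_subtractf diff_divide_distrib)
  moreover have "\<bar>(\<Sum>i<n. u i - v i) / real n\<bar> \<le> (\<Sum>i<n. \<bar>u i - v i\<bar>) / real n"
    by (simp add: divide_right_mono sum_abs)
  ultimately show ?thesis
    by linarith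
qed

definition clip :: "real \<Rightarrow> real \<Rightarrow> real" where
  "clip c x = max (- c) (min c x)"

lemma clip_measurable [measurable]: "clip c \<in> borel_measurable borel"
  unfolding clip_def by measurable

lemma clip_eq_self: "\<bar>x\<bar> \<le> c \<Longrightarrow> clip c x = x"
  unfolding clip_def by auto

lemma abs_minus_clip_le: "0 \<le> c \<Longrightarrow> \<bar>x - clip c x\<bar> \<le> \<bar>x\<bar>"
  unfolding clip_def by auto

lemma (in prob_space) integral_abs_minus_clip_tendsto_zero:
  assumes "integrable M U"
  shows "(\<lambda>m::nat. \<integral>\<omega>. \<bar>U \<omega> - clip (real m) (U \<omega>)\<bar> \<partial>M) \<longlonglongrightarrow> 0"
proof -
  have [measurable]: "U \<in> borel_measurable M"
    using assms by (rule borel_measurable_integrable)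
  have "(\<lambda>m::nat. \<integral>\<omega>. \<bar>U \<omega> - clip (real m) (U \<omega>)\<bar> \<partial>M) \<longlonglongrightarrow> (\<integral>\<omega>. 0 \<partial>M)"
  proof (rule integral_dominated_convergence[where w="\<lambda>\<omega>. \<bar>U \<omega>\<bar>"])
    show "AE \<omega> in M. (\<lambda>m. \<bar>U \<omega> - clip (real m) (U \<omega>)\<bar>) \<longlonglongrightarrow> 0"
    proof (intro AE_I2 tendsto_eventually)
      fix \<omega>
      obtain N :: nat where "\<bar>U \<omega>\<bar> \<le> real N"
        using real_arch_simple by blast
      then show "\<forall>\<^sub>F m in sequentially. \<bar>U \<omega> - clip (real m) (U \<omega>)\<bar> = 0"
        unfolding eventually_sequentially by (intro exI[of _ N]) (auto simp: clip_eq_self)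
    qed
    show "AE \<omega> in M. norm \<bar>U \<omega> - clip (real m) (U \<omega>)\<bar> \<le> \<bar>U \<omega>\<bar>" for m
      by (intro AE_I2) (simp add: abs_minus_clip_le)
  qed (use assms in auto)
  then show ?thesis
    by simp
qed

lemma (in prob_space) Hoeffding_ineq_clip:
  fixes U :: "nat \<Rightarrow> 'a \<Rightarrow> real"
  assumes ind: "indep_vars (\<lambda>_. borel) U UNIV"
    and ident: "\<And>i. distr M borel (U i) = distr M borel (U 0)"
    and "0 < c" "0 \<le> e" "0 < n"
  shows "prob {\<omega> \<in> space M. e \<le> \<bar>(\<Sum>i<n. clip c (U i \<omega>)) / real n - expectation (\<lambda>\<omega>. clip c (U 0 \<omega>))\<bar>}
           \<le> 2 * exp (- (e\<^sup>2 / (2 * c\<^sup>2) * real n))"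
proof -
  have [measurable]: "U i \<in> borel_measurable M" for i
    using ind unfolding indep_vars_def by auto
  interpret iid_interval_bounded_random_variables M "{..<n}" "\<lambda>i \<omega>. clip c (U i \<omega>)"
    "\<lambda>\<omega>. clip c (U 0 \<omega>)" "- c" c
  proof
    show "indep_vars (\<lambda>_. borel) (\<lambda>i \<omega>. clip c (U i \<omega>)) {..<n}"
      by (rule indep_vars_compose2[OF indep_vars_subset[OF ind subset_UNIV]]) simp
    show "distr M borel (\<lambda>\<omega>. clip c (U i \<omega>)) = distr M borel (\<lambda>\<omega>. clip c (U 0 \<omega>))" for i
      by (rule distr_compose_eq[of M borel U i 0, OF ident]) auto
    show "AE \<omega> in M. clip c (U 0 \<omega>) \<in> {- c..c}"
      using \<open>0 < c\<close> by (intro AE_I2) (auto simp: clip_def)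
  qed auto
  interpret Hoeffding_ineq_iid M "{..<n}" "\<lambda>i \<omega>. clip c (U i \<omega>)" "\<lambda>\<omega>. clip c (U 0 \<omega>)" "- c" c
    "expectation (\<lambda>\<omega>. clip c (U 0 \<omega>))"
    by unfold_locales simp
  have "{..<n} \<noteq> {}" "- c < c"
    using assms(3,5) by auto
  from Hoeffding_ineq_abs_ge'[OF assms(4) this(2,1)]
  have "prob {\<omega> \<in> space M. e \<le> \<bar>(\<Sum>i<n. clip c (U i \<omega>)) / real n - expectation (\<lambda>\<omega>. clip c (U 0 \<omega>))\<bar>}
      \<le> 2 * exp (-2 * real n * e\<^sup>2 / (c - - c)\<^sup>2)"
    by (simp only: card_lessThan)
  also have "-2 * real n * e\<^sup>2 / (c - - c)\<^sup>2 = - (e\<^sup>2 / (2 * c\<^sup>2) * real n)"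
    using assms(3) by (simp add: power2_eq_square field_simps)
  finally show ?thesis .
qed

lemma (in prob_space) prob_average_ge_le:
  fixes V :: "nat \<Rightarrow> 'a \<Rightarrow> real"
  assumes "\<And>i. integrable M (V i)" "\<And>i \<omega>. 0 \<le> V i \<omega>" "\<And>i. expectation (V i) = expectation (V 0)"
    and "0 < e" "0 < n"
  shows "prob {\<omega> \<in> space M. e \<le> (\<Sum>i<n. V i \<omega>) / real n} \<le> expectation (V 0) / e"
proof -
  have "prob {\<omega> \<in> space M. e \<le> (\<Sum>i<n. V i \<omega>) / real n} \<le> (\<integral>\<omega>. (\<Sum>i<n. V i \<omega>) / real n \<partial>M) / e"
    by (rule integral_Markov_inequality_measure[where A="space M"])
      (use assms(1,2,4) in \<open>auto intro!: AE_I2 divide_nonneg_nonneg sum_nonneg\<close>)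
  also have "(\<integral>\<omega>. (\<Sum>i<n. V i \<omega>) / real n \<partial>M) = (\<Sum>i<n. expectation (V i)) / real n"
    using assms(1) by (simp add: integral_sum)
  also have "\<dots> = expectation (V 0)"
    using assms(5) by (simp add: sum.cong[OF refl assms(3)])
  finally show ?thesis .
qed

text \<open>Truncation at level \<open>c\<close> splits the average into a bounded part, handled by Hoeffding's
  inequality, and a remainder whose mean tends to \<open>0\<close> as \<open>c \<rightarrow> \<infinity>\<close>, handled by Markov's inequality.\<close>

lemma (in prob_space) prob_average_deviation_le:
  fixes U :: "nat \<Rightarrow> 'a \<Rightarrow> real"
  assumes ind: "indep_vars (\<lambda>_. borel) U UNIV"
    and ident: "\<And>i. distr M borel (U i) = distr M borel (U 0)"
    and int: "integrable M (U 0)"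
    and "0 < c" "0 < e" "0 < n"
    and tail: "expectation (\<lambda>\<omega>. \<bar>U 0 \<omega> - clip c (U 0 \<omega>)\<bar>) < e / 3"
  shows "prob {\<omega> \<in> space M. e < \<bar>(\<Sum>i<n. U i \<omega>) / real n - expectation (U 0)\<bar>}
           \<le> 2 * exp (- ((e / 3)\<^sup>2 / (2 * c\<^sup>2) * real n))
             + expectation (\<lambda>\<omega>. \<bar>U 0 \<omega> - clip c (U 0 \<omega>)\<bar>) / (e / 3)"
proof -
  have [measurable]: "U i \<in> borel_measurable M" for i
    using ind unfolding indep_vars_def by auto
  have int_U: "integrable M (U i)" for i
    using identically_distributed_expectation(1)[OF ident] int by auto
  have int_clip: "integrable M (\<lambda>\<omega>. clip c (U i \<omega>))" for i
    by (rule Bochner_Integration.integrable_bound[where f="\<lambda>_. c"]) (use \<open>0 < c\<close> in \<open>auto simp: clip_def\<close>)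
  define residual where "residual i \<omega> = \<bar>U i \<omega> - clip c (U i \<omega>)\<bar>" for i \<omega>
  have residual_int: "integrable M (residual i)" for i
    unfolding residual_def using int_U int_clip by auto
  have residual_mean: "expectation (residual i) = expectation (residual 0)" for i
    using identically_distributed_expectation(2)[OF distr_compose_eq[of M borel U i 0
        "\<lambda>x. \<bar>x - clip c x\<bar>" borel, OF ident]]
    unfolding residual_def by simp
  define A where "A = {\<omega> \<in> space M.
    e / 3 \<le> \<bar>(\<Sum>i<n. clip c (U i \<omega>)) / real n - expectation (\<lambda>\<omega>. clip c (U 0 \<omega>))\<bar>}"
  define B where "B = {\<omega> \<in> space M. e / 3 \<le> (\<Sum>i<n. residual i \<omega>) / real n}"
  have mean_gap: "\<bar>expectation (U 0) - expectation (\<lambda>\<omega>. clip c (U 0 \<omega>))\<bar> \<le> expectation (residual 0)"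
    using integral_abs_bound[of M "\<lambda>\<omega>. U 0 \<omega> - clip c (U 0 \<omega>)"] int_U int_clip
    unfolding residual_def by simp
  have "{\<omega> \<in> space M. e < \<bar>(\<Sum>i<n. U i \<omega>) / real n - expectation (U 0)\<bar>} \<subseteq> A \<union> B"
  proof
    fix \<omega> assume \<omega>: "\<omega> \<in> {\<omega> \<in> space M. e < \<bar>(\<Sum>i<n. U i \<omega>) / real n - expectation (U 0)\<bar>}"
    have "e < \<bar>(\<Sum>i<n. clip c (U i \<omega>)) / real n - expectation (\<lambda>\<omega>. clip c (U 0 \<omega>))\<bar>
        + (\<Sum>i<n. residual i \<omega>) / real n + e / 3"
      using \<omega> mean_gap tail abs_average_diff_le[of "\<lambda>i. U i \<omega>" n "expectation (U 0)"
          "\<lambda>i. clip c (U i \<omega>)" "expectation (\<lambda>\<omega>. clip c (U 0 \<omega>))"]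
      unfolding residual_def by auto
    then have "e / 3 \<le> \<bar>(\<Sum>i<n. clip c (U i \<omega>)) / real n - expectation (\<lambda>\<omega>. clip c (U 0 \<omega>))\<bar>
        \<or> e / 3 \<le> (\<Sum>i<n. residual i \<omega>) / real n"
      by linarith
    then show "\<omega> \<in> A \<union> B"
      using \<omega> unfolding A_def B_def by blast
  qed
  then have "prob {\<omega> \<in> space M. e < \<bar>(\<Sum>i<n. U i \<omega>) / real n - expectation (U 0)\<bar>} \<le> prob A + prob B"
    by (intro order_trans[OF finite_measure_mono measure_subadditive]) (auto simp: A_def B_def residual_def)
  moreover have "prob A \<le> 2 * exp (- ((e / 3)\<^sup>2 / (2 * c\<^sup>2) * real n))"
    unfolding A_def using Hoeffding_ineq_clip[OF ind ident, of c "e / 3" n] assms(4-6) by simp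
  moreover have "prob B \<le> expectation (residual 0) / (e / 3)"
    unfolding B_def using \<open>0 < e\<close> \<open>0 < n\<close>
    by (intro prob_average_ge_le[where V=residual, OF residual_int _ residual_mean]) (auto simp: residual_def)
  ultimately show ?thesis
    unfolding residual_def by linarith
qed

theorem (in prob_space) weak_law_of_large_numbers:
  fixes U :: "nat \<Rightarrow> 'a \<Rightarrow> real"
  assumes ind: "indep_vars (\<lambda>_. borel) U UNIV"
    and ident: "\<And>i. distr M borel (U i) = distr M borel (U 0)"
    and int: "integrable M (U 0)" and e: "0 < e"
  shows "(\<lambda>n. prob {\<omega> \<in> space M. e < \<bar>(\<Sum>i<n. U i \<omega>) / real n - expectation (U 0)\<bar>}) \<longlonglongrightarrow> 0"
proof (rule order_tendstoI)
  show "\<forall>\<^sub>F n in sequentially. a < prob {\<omega> \<in> space M. e < \<bar>(\<Sum>i<n. U i \<omega>) / real n - expectation (U 0)\<bar>}"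
    if "a < 0" for a
    by (intro always_eventually allI less_le_trans[OF that measure_nonneg])
next
  fix \<eta> :: real assume "0 < \<eta>"
  define tail where "tail c = expectation (\<lambda>\<omega>. \<bar>U 0 \<omega> - clip c (U 0 \<omega>)\<bar>)" for c
  have "\<forall>\<^sub>F m in sequentially. tail (real m) < min (e / 3) (e * \<eta> / 6)"
    using order_tendstoD(2)[OF integral_abs_minus_clip_tendsto_zero[OF int], of "min (e / 3) (e * \<eta> / 6)"]
      e \<open>0 < \<eta>\<close> unfolding tail_def by simp
  from eventually_conj[OF this eventually_ge_at_top[of "1 :: nat"]]
  obtain m :: nat where "tail (real m) < min (e / 3) (e * \<eta> / 6)" "1 \<le> m"
    unfolding eventually_sequentially by blast
  then have m: "tail (real m) < e / 3" "tail (real m) / (e / 3) < \<eta> / 2" "0 < real m"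
    using e by (auto simp: field_simps)
  define k where "k = (e / 3)\<^sup>2 / (2 * (real m)\<^sup>2)"
  have "0 < k"
    unfolding k_def using e m(3) by auto
  have "(\<lambda>n. 2 * exp (- (k * real n))) \<longlonglongrightarrow> 0"
    by (rule tendsto_mult_right_zero[OF exp_neg_linear_tendsto_zero[OF \<open>0 < k\<close>]])
  then have "\<forall>\<^sub>F n in sequentially. 2 * exp (- (k * real n)) < \<eta> / 2"
    by (rule order_tendstoD(2)) (use \<open>0 < \<eta>\<close> in simp)
  then show "\<forall>\<^sub>F n in sequentially.
      prob {\<omega> \<in> space M. e < \<bar>(\<Sum>i<n. U i \<omega>) / real n - expectation (U 0)\<bar>} < \<eta>"
    using eventually_gt_at_top[of 0]
  proof eventually_elim
    case (elim n)
    have "prob {\<omega> \<in> space M. e < \<bar>(\<Sum>i<n. U i \<omega>) / real n - expectation (U 0)\<bar>}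
        \<le> 2 * exp (- (k * real n)) + tail (real m) / (e / 3)"
      using prob_average_deviation_le[OF ind ident int m(3) e elim(2) m(1)[unfolded tail_def]]
      unfolding k_def tail_def .
    then show ?case
      using elim(1) m(2) by linarith
  qed
qed

corollary (in prob_space) weak_law_of_large_numbers_comp:
  fixes xi :: "nat \<Rightarrow> 'a \<Rightarrow> 'b::topological_space"
  assumes ind: "indep_vars (\<lambda>_. borel) xi UNIV"
    and ident: "\<And>i. distr M borel (xi i) = distr M borel (xi 0)"
    and [measurable]: "f \<in> borel_measurable borel"
    and int: "integrable M (\<lambda>\<omega>. f (xi 0 \<omega>))" and "0 < e"
  shows "(\<lambda>n. prob {\<omega> \<in> space M.
           e < \<bar>(\<Sum>i<n. f (xi i \<omega>)) / real n - expectation (\<lambda>\<omega>. f (xi 0 \<omega>))\<bar>}) \<longlonglongrightarrow> 0"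
proof (rule weak_law_of_large_numbers[where U="\<lambda>i \<omega>. f (xi i \<omega>)", OF _ _ int \<open>0 < e\<close>])
  have [measurable]: "xi i \<in> borel_measurable M" for i
    using ind unfolding indep_vars_def by auto
  show "indep_vars (\<lambda>_. borel) (\<lambda>i \<omega>. f (xi i \<omega>)) UNIV"
    by (rule indep_vars_compose2[OF ind]) simp
  show "distr M borel (\<lambda>\<omega>. f (xi i \<omega>)) = distr M borel (\<lambda>\<omega>. f (xi 0 \<omega>))" for i
    by (rule distr_compose_eq[of M borel xi i 0, OF ident]) auto
qed

section \<open>A uniform law over a compact parameter set\<close>

lemma SUP_abs_diff_le_of_net:
  fixes f F :: "'c::metric_space \<Rightarrow> real"
  assumes "Theta \<noteq> {}" "C \<subseteq> Theta" "Theta \<subseteq> (\<Union>c\<in>C. ball c \<delta>)"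
    and f_lip: "\<And>th th'. th \<in> Theta \<Longrightarrow> th' \<in> Theta \<Longrightarrow> \<bar>f th - f th'\<bar> \<le> dist th th' * a"
    and F_lip: "\<And>th th'. th \<in> Theta \<Longrightarrow> th' \<in> Theta \<Longrightarrow> \<bar>F th - F th'\<bar> \<le> dist th th' * b"
    and on_net: "\<And>c. c \<in> C \<Longrightarrow> \<bar>f c - F c\<bar> \<le> e"
    and "0 \<le> a" "0 \<le> b"
  shows "(SUP th\<in>Theta. \<bar>f th - F th\<bar>) \<le> e + \<delta> * (a + b)"
proof (rule cSUP_least[OF assms(1)])
  fix th assume th: "th \<in> Theta"
  then obtain c where c: "c \<in> C" "dist th c < \<delta>"
    using assms(3) by (auto simp: dist_commute)
  then have "c \<in> Theta"
    using assms(2) by auto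
  have "dist th c * a \<le> \<delta> * a" "dist th c * b \<le> \<delta> * b"
    using c(2) \<open>0 \<le> a\<close> \<open>0 \<le> b\<close> by (auto intro: mult_right_mono)
  then show "\<bar>f th - F th\<bar> \<le> e + \<delta> * (a + b)"
    using f_lip[OF th \<open>c \<in> Theta\<close>] F_lip[OF th \<open>c \<in> Theta\<close>] on_net[OF c(1)]
    by (simp add: algebra_simps)
qed

lemma (in finite_measure) measure_tendsto_zero_if_covered:
  assumes "finite I" "\<And>i n. i \<in> I \<Longrightarrow> A i n \<in> sets M"
    and "\<And>i. i \<in> I \<Longrightarrow> (\<lambda>n. measure M (A i n)) \<longlonglongrightarrow> 0"
    and "\<And>n. S n \<subseteq> (\<Union>i\<in>I. A i n)"
  shows "(\<lambda>n. measure M (S n)) \<longlonglongrightarrow> 0"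
proof (rule tendsto_sandwich[where f="\<lambda>_. 0" and h="\<lambda>n. \<Sum>i\<in>I. measure M (A i n)"])
  show "\<forall>\<^sub>F n in sequentially. measure M (S n) \<le> (\<Sum>i\<in>I. measure M (A i n))"
  proof (intro always_eventually allI)
    fix n
    show "measure M (S n) \<le> (\<Sum>i\<in>I. measure M (A i n))"
    proof (cases "S n \<in> sets M")
      case True
      have "measure M (S n) \<le> measure M (\<Union>i\<in>I. A i n)"
        using assms by (intro finite_measure_mono) auto
      also have "\<dots> \<le> (\<Sum>i\<in>I. measure M (A i n))"
        using assms by (intro measure_UNION_le) auto
      finally show ?thesis .
    qed (simp add: measure_notin_sets sum_nonneg)
  qed
  show "(\<lambda>n. \<Sum>i\<in>I. measure M (A i n)) \<longlonglongrightarrow> 0"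
    using assms(3) by (rule tendsto_null_sum)
qed auto

lemma abs_average_diff_le_scaled:
  fixes u v w :: "nat \<Rightarrow> real"
  assumes "\<And>i. \<bar>u i - v i\<bar> \<le> d * w i"
  shows "\<bar>(\<Sum>i<n. u i) / real n - (\<Sum>i<n. v i) / real n\<bar> \<le> d * ((\<Sum>i<n. w i) / real n)"
proof -
  have "\<bar>\<Sum>i<n. u i - v i\<bar> \<le> (\<Sum>i<n. d * w i)"
    using assms by (intro order_trans[OF sum_abs sum_mono])
  then have "\<bar>\<Sum>i<n. u i - v i\<bar> / real n \<le> (\<Sum>i<n. d * w i) / real n"
    by (rule divide_right_mono) simp
  moreover have "(\<Sum>i<n. u i) / real n - (\<Sum>i<n. v i) / real n = (\<Sum>i<n. u i - v i) / real n"
    by (simp add: sum_subtractf diff_divide_distrib)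
  ultimately show ?thesis
    by (simp add: sum_distrib_left)
qed

lemma abs_integral_diff_le_scaled:
  fixes f g K :: "'a \<Rightarrow> real"
  assumes "integrable M f" "integrable M g" "integrable M K" "\<And>x. \<bar>f x - g x\<bar> \<le> d * K x"
  shows "\<bar>(\<integral>x. f x \<partial>M) - (\<integral>x. g x \<partial>M)\<bar> \<le> d * (\<integral>x. K x \<partial>M)"
proof -
  have "\<bar>(\<integral>x. f x \<partial>M) - (\<integral>x. g x \<partial>M)\<bar> = \<bar>\<integral>x. f x - g x \<partial>M\<bar>"
    using assms(1,2) by simp
  also have "\<dots> \<le> (\<integral>x. \<bar>f x - g x\<bar> \<partial>M)"
    by (rule integral_abs_bound)
  also have "\<dots> \<le> (\<integral>x. d * K x \<partial>M)"
    using assms by (intro integral_mono) auto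
  finally show ?thesis
    by simp
qed

theorem (in prob_space) uniform_weak_law_of_large_numbers:
  fixes xi :: "nat \<Rightarrow> 'a \<Rightarrow> 'b::topological_space" and g :: "'c::metric_space \<Rightarrow> 'b \<Rightarrow> real"
  assumes ind: "indep_vars (\<lambda>_. borel) xi UNIV"
    and ident: "\<And>i. distr M borel (xi i) = distr M borel (xi 0)"
    and Theta: "compact Theta" "Theta \<noteq> {}"
    and g_meas [measurable]: "\<And>th. g th \<in> borel_measurable borel"
    and K_meas [measurable]: "K \<in> borel_measurable borel"
    and K_int: "integrable M (\<lambda>\<omega>. K (xi 0 \<omega>))"
    and lip: "\<And>th th' v. th \<in> Theta \<Longrightarrow> th' \<in> Theta \<Longrightarrow> \<bar>g th v - g th' v\<bar> \<le> dist th th' * K v"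
    and env: "\<And>th v. th \<in> Theta \<Longrightarrow> \<bar>g th v\<bar> \<le> K v"
    and "0 < \<epsilon>"
  shows "(\<lambda>n. prob {\<omega> \<in> space M. \<epsilon> < (SUP th\<in>Theta.
            \<bar>(\<Sum>i<n. g th (xi i \<omega>)) / real n - expectation (\<lambda>\<omega>. g th (xi 0 \<omega>))\<bar>)}) \<longlonglongrightarrow> 0"
proof -
  have [measurable]: "xi i \<in> borel_measurable M" for i
    using ind unfolding indep_vars_def by auto
  define avg where "avg f n \<omega> = (\<Sum>i<n. f (xi i \<omega>)) / real n" for f :: "'b \<Rightarrow> real" and n \<omega>
  define mean where "mean f = expectation (\<lambda>\<omega>. f (xi 0 \<omega>))" for f :: "'b \<Rightarrow> real"
  define dev where "dev f n = {\<omega> \<in> space M. \<epsilon> / 3 < \<bar>avg f n \<omega> - mean f\<bar>}" for f n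
  have dev_lim: "(\<lambda>n. prob (dev f n)) \<longlonglongrightarrow> 0"
    if "f \<in> borel_measurable borel" "integrable M (\<lambda>\<omega>. f (xi 0 \<omega>))" for f
    unfolding dev_def avg_def mean_def
    by (rule weak_law_of_large_numbers_comp[OF ind ident that]) (use \<open>0 < \<epsilon>\<close> in simp)
  have dev_sets: "dev f n \<in> sets M" if "f \<in> borel_measurable borel" for f n
    using that unfolding dev_def avg_def by measurable
  have K_nonneg: "0 \<le> K v" for v
    using env Theta(2) by (meson abs_ge_zero ex_in_conv order_trans)
  have g_int: "integrable M (\<lambda>\<omega>. g th (xi 0 \<omega>))" if "th \<in> Theta" for th
    using env[OF that]
    by (intro Bochner_Integration.integrable_bound[OF K_int]) (auto intro!: AE_I2 order_trans[OF _ abs_ge_self])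
  have avg_lip: "\<bar>avg (g th) n \<omega> - avg (g th') n \<omega>\<bar> \<le> dist th th' * avg K n \<omega>"
    if "th \<in> Theta" "th' \<in> Theta" for th th' n \<omega>
    unfolding avg_def using lip[OF that] by (rule abs_average_diff_le_scaled)
  have mean_lip: "\<bar>mean (g th) - mean (g th')\<bar> \<le> dist th th' * mean K"
    if "th \<in> Theta" "th' \<in> Theta" for th th'
    unfolding mean_def using g_int that K_int lip[OF that] by (intro abs_integral_diff_le_scaled) auto
  define \<delta> where "\<delta> = \<epsilon> / (3 * (2 * mean K + \<epsilon> + 1))"
  have "0 \<le> mean K"
    unfolding mean_def using K_nonneg by simp
  then have \<delta>: "0 < \<delta>" "\<delta> * (2 * mean K + \<epsilon> / 3) \<le> \<epsilon> / 3"
    unfolding \<delta>_def using \<open>0 < \<epsilon>\<close> by (auto simp: field_simps)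
  obtain C where C: "finite C" "C \<subseteq> Theta" "Theta \<subseteq> (\<Union>c\<in>C. ball c \<delta>)"
    using seq_compact_imp_totally_bounded[OF compact_imp_seq_compact[OF Theta(1)]] \<delta>(1) by meson
  have cover: "{\<omega> \<in> space M. \<epsilon> < (SUP th\<in>Theta. \<bar>avg (g th) n \<omega> - mean (g th)\<bar>)}
      \<subseteq> (\<Union>f\<in>insert K (g ` C). dev f n)" for n
  proof (rule subsetI, rule ccontr)
    fix \<omega> assume \<omega>: "\<omega> \<in> {\<omega> \<in> space M. \<epsilon> < (SUP th\<in>Theta. \<bar>avg (g th) n \<omega> - mean (g th)\<bar>)}"
      and "\<omega> \<notin> (\<Union>f\<in>insert K (g ` C). dev f n)"
    then have K_dev: "\<bar>avg K n \<omega> - mean K\<bar> \<le> \<epsilon> / 3"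
      and on_net: "\<And>c. c \<in> C \<Longrightarrow> \<bar>avg (g c) n \<omega> - mean (g c)\<bar> \<le> \<epsilon> / 3"
      unfolding dev_def by auto
    have "0 \<le> avg K n \<omega>"
      unfolding avg_def using K_nonneg by (simp add: sum_nonneg)
    then have "(SUP th\<in>Theta. \<bar>avg (g th) n \<omega> - mean (g th)\<bar>) \<le> \<epsilon> / 3 + \<delta> * (avg K n \<omega> + mean K)"
      using avg_lip mean_lip on_net \<open>0 \<le> mean K\<close>
      by (intro SUP_abs_diff_le_of_net[OF Theta(2) C(2,3)])
    also have "\<dots> \<le> \<epsilon> / 3 + \<delta> * (2 * mean K + \<epsilon> / 3)"
      using abs_le_D1[OF K_dev] \<delta>(1) by (intro add_left_mono mult_left_mono) auto
    finally have "(SUP th\<in>Theta. \<bar>avg (g th) n \<omega> - mean (g th)\<bar>) < \<epsilon>"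
      using \<delta>(2) \<open>0 < \<epsilon>\<close> by linarith
    then show False
      using \<omega> by simp
  qed
  have "(\<lambda>n. prob {\<omega> \<in> space M. \<epsilon> < (SUP th\<in>Theta. \<bar>avg (g th) n \<omega> - mean (g th)\<bar>)}) \<longlonglongrightarrow> 0"
  proof (rule measure_tendsto_zero_if_covered[OF _ _ _ cover])
    show "dev f n \<in> sets M" if "f \<in> insert K (g ` C)" for f n
      using that by (auto intro!: dev_sets g_meas K_meas)
    show "(\<lambda>n. prob (dev f n)) \<longlonglongrightarrow> 0" if "f \<in> insert K (g ` C)" for f
      using that C(2) K_int g_int by (auto intro!: dev_lim g_meas K_meas)
  qed (use C(1) in simp)
  then show ?thesis
    unfolding avg_def mean_def .
qed

text \<open>Only the i.i.d. sampling, the compactness of \<open>\<Theta>\<close> in (A2) and the moment conditions (A4) are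
  needed; the model assumption and (A1), (A3), (A5) concern identification and the limit
  distribution of the estimator and are not used here.\<close>

theorem lemmaA1:
  fixes M :: "'a measure"
    and tau :: real
    and Y X :: "nat \<Rightarrow> 'a \<Rightarrow> real"
    and Z :: "nat \<Rightarrow> 'a \<Rightarrow> real ^ 'p"
    and Theta :: "((real \<times> real \<times> real \<times> (real ^ 'p)) \<times> real) set"
    and theta_tau :: "(real \<times> real \<times> real \<times> (real ^ 'p)) \<times> real"
    and T :: "real set"
    and t0 :: real
    and fX :: "real \<Rightarrow> real"
    and G :: "(real \<times> real \<times> real \<times> (real ^ 'p)) \<times> real \<Rightarrow> (real \<times> real \<times> real \<times> (real ^ 'p)) \<times> real"
    and H :: "(real \<times> real \<times> real \<times> (real ^ 'p)) \<times> real \<Rightarrow> (real \<times> real \<times> real \<times> (real ^ 'p)) \<times> real"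
  assumes P: "prob_space M"
    and tau: "0 < tau" "tau < 1"
    and meas: "\<And>i. Y i \<in> borel_measurable M" "\<And>i. X i \<in> borel_measurable M"
              "\<And>i. Z i \<in> borel_measurable M"
    and indep: "prob_space.indep_vars M (\<lambda>_. borel) (\<lambda>i \<omega>. (Y i \<omega>, X i \<omega>, Z i \<omega>)) UNIV"
    and ident: "\<And>i. distr M borel (\<lambda>\<omega>. (Y i \<omega>, X i \<omega>, Z i \<omega>))
                    = distr M borel (\<lambda>\<omega>. (Y 0 \<omega>, X 0 \<omega>, Z 0 \<omega>))"
    (* model: the conditional tau-expectile of Y given (X,Z) is xi_tau^T V(t_tau) *)
    and model: "\<And>\<nu>::real. AE \<omega> in M.
         real_cond_exp M (vimage_algebra (space M) (\<lambda>\<omega>. (X 0 \<omega>, Z 0 \<omega>)) borel)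
           (\<lambda>\<omega>. rho tau (Y 0 \<omega> - lin_index (fst theta_tau) (snd theta_tau) (X 0 \<omega>) (Z 0 \<omega>))) \<omega>
         \<le> real_cond_exp M (vimage_algebra (space M) (\<lambda>\<omega>. (X 0 \<omega>, Z 0 \<omega>)) borel)
           (\<lambda>\<omega>. rho tau (Y 0 \<omega> - \<nu>)) \<omega>"
    (* (A1) *)
    and A1: "compact T" "t0 \<in> T"
       "\<And>t. t \<in> T \<Longrightarrow> t \<noteq> t0 \<Longrightarrow>
          (INF xi. Mpop M tau (Y 0) (X 0) (Z 0) (xi, t0)) < (INF xi. Mpop M tau (Y 0) (X 0) (Z 0) (xi, t))"
    (* (A2) *)
    and A2: "compact Theta" "theta_tau \<in> Theta"
    (* (A3) *)
    and A3: "distributed M lborel (X 0) (\<lambda>x. ennreal (fX x))" "\<And>x. fX x \<ge> 0"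
       "\<exists>\<delta>>0. (\<forall>x\<in>ball t0 \<delta>. fX x > 0) \<and> bounded (fX ` ball t0 \<delta>) \<and> continuous_on (ball t0 \<delta>) fX"
    (* (A4) *)
    and A4: "integrable M (\<lambda>\<omega>. (Y 0 \<omega>)\<^sup>2)" "integrable M (\<lambda>\<omega>. (X 0 \<omega>)\<^sup>2)"
       "integrable M (\<lambda>\<omega>. (norm (Z 0 \<omega>))\<^sup>2)"
    (* (A5): Hessian of M_tau at theta_tau exists and is nonsingular, given beta2 <> 0 *)
    and A5: "fst (snd (snd (fst theta_tau))) \<noteq> 0 \<Longrightarrow>
       (\<exists>U. open U \<and> theta_tau \<in> U \<and>
          (\<forall>th\<in>U. (Mpop M tau (Y 0) (X 0) (Z 0) has_derivative (\<lambda>h. G th \<bullet> h)) (at th))) \<and>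
       (G has_derivative H) (at theta_tau) \<and> inj H"
  shows "\<forall>\<epsilon>>0. (\<lambda>n. measure M {\<omega>\<in>space M.
            (SUP th\<in>Theta. \<bar>Mn tau Y X Z n th \<omega> - Mpop M tau (Y 0) (X 0) (Z 0) th\<bar>) > \<epsilon>})
          \<longlonglongrightarrow> 0"
proof (intro allI impI)
  fix \<epsilon> :: real assume "0 < \<epsilon>"
  interpret prob_space M by (rule P)
  obtain B where B: "\<And>th. th \<in> Theta \<Longrightarrow> norm th \<le> B"
    using compact_imp_bounded[OF A2(1)] by (auto simp: bounded_iff)
  define xi where "xi i \<omega> = (Y i \<omega>, X i \<omega>, Z i \<omega>)" for i \<omega>
  have "Mn tau Y X Z n th \<omega> = (\<Sum>i<n. expectile_loss tau th (xi i \<omega>)) / real n"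
    and "Mpop M tau (Y 0) (X 0) (Z 0) th = expectation (\<lambda>\<omega>. expectile_loss tau th (xi 0 \<omega>))" for n th \<omega>
    unfolding Mn_def Mpop_def expectile_loss_def xi_def by simp_all
  moreover have "(\<lambda>n. prob {\<omega> \<in> space M. \<epsilon> < (SUP th\<in>Theta. \<bar>(\<Sum>i<n. expectile_loss tau th (xi i \<omega>)) / real n
      - expectation (\<lambda>\<omega>. expectile_loss tau th (xi 0 \<omega>))\<bar>)}) \<longlonglongrightarrow> 0"
  proof (rule uniform_weak_law_of_large_numbers[where K="loss_envelope B"])
    show "indep_vars (\<lambda>_. borel) xi UNIV" "distr M borel (xi i) = distr M borel (xi 0)" for i
      using indep ident unfolding xi_def[abs_def] by simp_all
    show "integrable M (\<lambda>\<omega>. loss_envelope B (xi 0 \<omega>))"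
      unfolding xi_def using integrable_loss_envelope[OF meas A4] .
    show "\<bar>expectile_loss tau th v - expectile_loss tau th' v\<bar> \<le> dist th th' * loss_envelope B v"
      "\<bar>expectile_loss tau th v\<bar> \<le> loss_envelope B v" if "th \<in> Theta" "th' \<in> Theta" for th th' v
      using expectile_loss_lipschitz_bound[of tau th B th' v] tau B that by auto
  qed (use A2 \<open>0 < \<epsilon>\<close> in auto)
  ultimately show "(\<lambda>n. measure M {\<omega>\<in>space M.
      (SUP th\<in>Theta. \<bar>Mn tau Y X Z n th \<omega> - Mpop M tau (Y 0) (X 0) (Z 0) th\<bar>) > \<epsilon>}) \<longlonglongrightarrow> 0"
    by simp
qed

end
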